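(* Let $H$ be a graph with $1\le\delta(H)\le|V(H)|-2$ and let $\{\mathcal H_i\}_{i=1}^s$ be a $d$-sequence of $H$ with $Z=\min\{z_i(H): 2\le i\le s\}\le 0$. Let $G=H+K_{1,k}$. If $k\ge d_H-Z$, then $str(G)=|V(G)|+1$.
   Context: For a graph $G$ of order $p$, a numbering is a bijection $f:V(G)\to[1,p]$; $str_f(G)=\max\{f(u)+f(v): uv\in E(G)\}$ and $str(G)=\min_f str_f(G)$. $G+H$ is disjoint union; $K_{1,k}$ is the star with $k$ leaves; $mK_1$ is the edgeless graph on $m$ vertices; $K_r$ the complete graph. $d$-sequence: Let $G$ have order $p$ with $1\le\delta(G)\le p-2$. Set $\mathcal G_1=G_1=G$, $m_1=0$. For each $i$, write $\mathcal G_i=m_iK_1+G_i$, where $m_i\ge0$ is the number of isolated vertices of $\mathcal G_i$ and $G_i$ has no isolated vertices. If $\mathcal G_i$ is neither of the form $mK_1$ ($m\ge1$) nor $mK_1+K_r$ ($m\ge0$, $r\ge2$), choose any vertex $u_i$ of $G_i$, put $d_i=\deg_{G_i}(u_i)$, and let $\mathcal G_{i+1}$ be obtained from $G_i$ by deleting $u_i$ together with all its neighbours in $G_i$. Stop at the first index $s$ ($s\ge 2$) for which $\mathcal G_s$ is $m_sK_1$ with $m_s\ge1$ (then set $d_s=0$) or $m_sK_1+K_r$ with $m_s\ge0$, $r\ge2$ (then $d_s=r-1$). The sequence $\{\mathcal G_i\}_{i=1}^s$ is a $d$-sequence of $G$. Write $d_G=d_1$, $y_j(G)=m_j+1-d_j$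 and $z_i(G)=\sum_{j=2}^i y_j(G)$ for $2\le i\le s$. *)

theory Defs
  imports Main
begin

definition graph :: "'a set \<Rightarrow> 'a set set \<Rightarrow> bool" where
  "graph V E \<longleftrightarrow> finite V \<and> V \<noteq> {} \<and>
     (\<forall>e\<in>E. \<exists>x y. e = {x, y} \<and> x \<in> V \<and> y \<in> V \<and> x \<noteq> y)"

definition degree :: "'a set \<Rightarrow> 'a set set \<Rightarrow> 'a \<Rightarrow> nat" where
  "degree V E v = card {w \<in> V. {v, w} \<in> E}"

definition min_degree :: "'a set \<Rightarrow> 'a set set \<Rightarrow> nat" where
  "min_degree V E = Min (degree V E ` V)"

definition numbering :: "'a set \<Rightarrow> ('a \<Rightarrow> nat) \<Rightarrow> bool" where
  "numbering V f \<longleftrightarrow> bij_betw f V {1..card V}"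

definition str_f :: "'a set set \<Rightarrow> ('a \<Rightarrow> nat) \<Rightarrow> nat" where
  "str_f E f = Max {f u + f v | u v. {u, v} \<in> E}"

definition strength :: "'a set \<Rightarrow> 'a set set \<Rightarrow> nat" where
  "strength V E = Min {str_f E f | f. numbering V f}"

text \<open>Disjoint union H + K_{1,k}: H on the Inl side, the star on Inr 0 (centre)
  and Inr 1, ..., Inr k (leaves).\<close>

definition plus_star_V :: "'a set \<Rightarrow> nat \<Rightarrow> ('a + nat) set" where
  "plus_star_V V k = Inl ` V \<union> Inr ` {0..k}"

definition plus_star_E :: "'a set set \<Rightarrow> nat \<Rightarrow> ('a + nat) set set" where
  "plus_star_E E k = (image Inl) ` E \<union> {{Inr 0, Inr j} | j. j \<in> {1..k}}"

text \<open>Induced subgraphs of H = (V,E) are described by their vertex sets W.\<close>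

definition isolated_in :: "'a set set \<Rightarrow> 'a set \<Rightarrow> 'a set" where
  "isolated_in E W = {v \<in> W. \<not> (\<exists>w\<in>W. {v, w} \<in> E)}"

definition nonisolated_in :: "'a set set \<Rightarrow> 'a set \<Rightarrow> 'a set" where
  "nonisolated_in E W = {v \<in> W. \<exists>w\<in>W. {v, w} \<in> E}"

definition nbrs_in :: "'a set set \<Rightarrow> 'a set \<Rightarrow> 'a \<Rightarrow> 'a set" where
  "nbrs_in E W u = {w \<in> W. {u, w} \<in> E}"

text \<open>H[W] is of the form m K_1 with m \<ge> 1.\<close>
definition edgeless_form :: "'a set set \<Rightarrow> 'a set \<Rightarrow> bool" where
  "edgeless_form E W \<longleftrightarrow> W \<noteq> {} \<and> nonisolated_in E W = {}"

text \<open>H[W] is of the form m K_1 + K_r with m \<ge> 0, r \<ge> 2.\<close>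
definition complete_form :: "'a set set \<Rightarrow> 'a set \<Rightarrow> bool" where
  "complete_form E W \<longleftrightarrow> card (nonisolated_in E W) \<ge> 2 \<and>
     (\<forall>x\<in>nonisolated_in E W. \<forall>y\<in>nonisolated_in E W. x \<noteq> y \<longrightarrow> {x, y} \<in> E)"

definition stop_form :: "'a set set \<Rightarrow> 'a set \<Rightarrow> bool" where
  "stop_form E W \<longleftrightarrow> edgeless_form E W \<or> complete_form E W"

text \<open>A d-sequence of H = (V,E): length s, vertex sets W 1, ..., W s of the graphs
  \<G>_i (as induced subgraphs of H) and chosen vertices u 1, ..., u (s-1).\<close>
definition d_sequence :: "'a set \<Rightarrow> 'a set set \<Rightarrow> nat \<Rightarrow> (nat \<Rightarrow> 'a set) \<Rightarrow> (nat \<Rightarrow> 'a) \<Rightarrow> bool" where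
  "d_sequence V E s W u \<longleftrightarrow> 2 \<le> s \<and> W 1 = V \<and>
     (\<forall>i. 1 \<le> i \<and> i < s \<longrightarrow>
        \<not> stop_form E (W i) \<and> u i \<in> nonisolated_in E (W i) \<and>
        W (Suc i) = nonisolated_in E (W i) - insert (u i) (nbrs_in E (nonisolated_in E (W i)) (u i))) \<and>
     stop_form E (W s)"

definition dseq_m :: "'a set set \<Rightarrow> (nat \<Rightarrow> 'a set) \<Rightarrow> nat \<Rightarrow> nat" where
  "dseq_m E W i = card (isolated_in E (W i))"

definition dseq_d :: "'a set set \<Rightarrow> nat \<Rightarrow> (nat \<Rightarrow> 'a set) \<Rightarrow> (nat \<Rightarrow> 'a) \<Rightarrow> nat \<Rightarrow> nat" where
  "dseq_d E s W u i =
     (if i < s then card (nbrs_in E (nonisolated_in E (W i)) (u i))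
      else if edgeless_form E (W i) then 0
      else card (nonisolated_in E (W i)) - 1)"

definition dseq_y :: "'a set set \<Rightarrow> nat \<Rightarrow> (nat \<Rightarrow> 'a set) \<Rightarrow> (nat \<Rightarrow> 'a) \<Rightarrow> nat \<Rightarrow> int" where
  "dseq_y E s W u j = int (dseq_m E W j) + 1 - int (dseq_d E s W u j)"

definition dseq_z :: "'a set set \<Rightarrow> nat \<Rightarrow> (nat \<Rightarrow> 'a set) \<Rightarrow> (nat \<Rightarrow> 'a) \<Rightarrow> nat \<Rightarrow> int" where
  "dseq_z E s W u i = (\<Sum>j = 2..i. dseq_y E s W u j)"

end

theory Submission
  imports Defs
begin

text \<open>The lower bound \<open>str(G) \<ge> |V(G)| + 1\<close> holds for every graph without isolated
  vertices: the vertex labelled \<open>|V(G)|\<close> has a neighbour.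

  For the upper bound, number \<open>H\<close> along the d-sequence. In \<open>\<G>\<^sub>i\<close> the \<open>d\<^sub>i\<close>
  neighbours of \<open>u\<^sub>i\<close> come first, then a numbering of \<open>\<G>\<^sub>i\<^sub>+\<^sub>1\<close> shifted by
  \<open>d\<^sub>i\<close>, then \<open>u\<^sub>i\<close>, and the \<open>m\<^sub>i\<close> isolated vertices last; in \<open>\<G>\<^sub>s\<close> the
  vertices of \<open>K\<^sub>r\<close> precede the isolated ones. Going down from \<open>i = s\<close>, the
  numbering of \<open>\<G>\<^sub>i\<close> has all edge sums at most \<open>|\<G>\<^sub>i| + K\<close> as soon as
  \<open>K + y\<^sub>i + \<dots> + y\<^sub>j \<ge> 1\<close> for all \<open>j \<ge> i\<close>, because passing from \<open>\<G>\<^sub>i\<^sub>+\<^sub>1\<close> to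
  \<open>\<G>\<^sub>i\<close> trades \<open>K\<close> for \<open>K + y\<^sub>i\<close>. For \<open>i = 1\<close> and \<open>K = k\<close> the condition reads
  \<open>k \<ge> d\<^sub>H - z\<^sub>j\<close> for all \<open>j \<ge> 1\<close> (with \<open>z\<^sub>1 = 0\<close>), which follows from \<open>k \<ge> d\<^sub>H - Z\<close> and \<open>Z \<le> 0\<close>.
  Finally the centre of the star gets label 1, \<open>H\<close> is shifted by one and the leaves
  come last, so that every edge sum is at most \<open>|V(H)| + k + 2 = |V(G)| + 1\<close>.\<close>

lemma graph_edgeE:
  assumes "graph V E" "e \<in> E"
  obtains x y where "e = {x, y}" "x \<in> V" "y \<in> V" "x \<noteq> y"
  using assms unfolding graph_def by meson

lemma graph_edge_endpoints:
  assumes "graph V E" "{x, y} \<in> E"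
  shows "x \<noteq> y" "x \<in> V" "y \<in> V"
proof -
  obtain a b where "{x, y} = {a, b}" "a \<in> V" "b \<in> V" "a \<noteq> b"
    by (rule graph_edgeE[OF assms])
  then show "x \<noteq> y" "x \<in> V" "y \<in> V"
    by (auto simp: doubleton_eq_iff)
qed

lemma finite_edge_sums:
  assumes "graph V E"
  shows "finite {f x + f y | x y. {x, y} \<in> E}"
proof (rule finite_subset)
  show "{f x + f y | x y. {x, y} \<in> E} \<subseteq> (\<lambda>(x, y). f x + f y) ` (V \<times> V)"
  proof clarify
    fix x y assume "{x, y} \<in> E"
    then have "(x, y) \<in> V \<times> V" using graph_edge_endpoints[OF assms] by blast
    then show "f x + f y \<in> (\<lambda>(x, y). f x + f y) ` (V \<times> V)"
      by (rule rev_image_eqI) simp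
  qed
  show "finite ((\<lambda>(x, y). f x + f y) ` (V \<times> V))"
    using assms by (simp add: graph_def)
qed

lemma str_f_ge_edge:
  assumes "graph V E" "{x, y} \<in> E"
  shows "f x + f y \<le> str_f E f"
  unfolding str_f_def using assms(2) by (intro Max_ge finite_edge_sums[OF assms(1)]) blast

lemma str_f_le:
  assumes "graph V E" "E \<noteq> {}" "\<And>x y. {x, y} \<in> E \<Longrightarrow> f x + f y \<le> b"
  shows "str_f E f \<le> b"
  unfolding str_f_def
proof (rule Max.boundedI[OF finite_edge_sums[OF assms(1)]])
  obtain e where "e \<in> E" using assms(2) by blast
  moreover obtain x y where "e = {x, y}"
    using graph_edgeE[OF assms(1) \<open>e \<in> E\<close>] by metis
  ultimately show "{f x + f y | x y. {x, y} \<in> E} \<noteq> {}" by blast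
next
  fix z assume "z \<in> {f x + f y | x y. {x, y} \<in> E}"
  then obtain x y where "z = f x + f y" "{x, y} \<in> E" by blast
  then show "z \<le> b" using assms(3) by simp
qed

lemma numbering_bounds:
  assumes "numbering A f" "x \<in> A"
  shows "1 \<le> f x" "f x \<le> card A"
  using assms unfolding numbering_def bij_betw_def by auto

lemma numbering_inj:
  assumes "numbering A f" "x \<in> A" "y \<in> A" "x \<noteq> y"
  shows "f x \<noteq> f y"
  using assms unfolding numbering_def bij_betw_def inj_on_def by blast

lemma numbering_cong:
  "numbering A f \<Longrightarrow> (\<And>x. x \<in> A \<Longrightarrow> f x = g x) \<Longrightarrow> numbering A g"
  unfolding numbering_def using bij_betw_cong by blast

lemma ex_numbering: "finite A \<Longrightarrow> \<exists>f. numbering A f"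
  unfolding numbering_def by (rule finite_same_card_bij) auto

lemma numbering_Un:
  assumes f: "numbering A f" and g: "numbering B g" and "A \<inter> B = {}" "finite A" "finite B"
  shows "numbering (A \<union> B) (\<lambda>x. if x \<in> A then f x else card A + g x)"
proof -
  have "bij_betw (plus (card A)) {1..card B} {1 + card A..card B + card A}"
    by (simp add: bij_betw_def)
  from bij_betw_trans[OF g[unfolded numbering_def] this]
  have "bij_betw (\<lambda>x. card A + g x) B {1 + card A..card B + card A}"
    by (simp add: comp_def)
  with f assms(3) have "bij_betw (\<lambda>x. if x \<in> A then f x else card A + g x) (A \<union> B)
      ({1..card A} \<union> {1 + card A..card B + card A})"
    unfolding numbering_def by (intro bij_betw_disjoint_Un) auto
  moreover have "{1..card A} \<union> {1 + card A..card B + card A} = {1..card (A \<union> B)}"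
    using assms(3-5) by (auto simp: card_Un_disjoint)
  ultimately show ?thesis by (simp add: numbering_def)
qed

lemma str_f_ge_card_Suc:
  assumes G: "graph V E" and nb: "\<And>v. v \<in> V \<Longrightarrow> \<exists>w. {v, w} \<in> E" and f: "numbering V f"
  shows "card V + 1 \<le> str_f E f"
proof -
  have "finite V" "V \<noteq> {}" using G by (auto simp: graph_def)
  then have "card V \<in> f ` V"
    using f unfolding numbering_def bij_betw_def by (simp add: Suc_leI card_gt_0_iff)
  then obtain v where v: "v \<in> V" "f v = card V" by auto
  then obtain w where vw: "{v, w} \<in> E" using nb by blast
  then have "1 \<le> f w" using numbering_bounds(1)[OF f] graph_edge_endpoints(3)[OF G] by blast
  with v str_f_ge_edge[OF G vw, of f] show ?thesis by simp
qed

lemma finite_str_f_values: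
  assumes "graph V E"
  shows "finite {str_f E f | f. numbering V f}"
proof (cases "E = {}")
  case True
  then show ?thesis by (simp add: str_f_def)
next
  case False
  have "{str_f E f | f. numbering V f} \<subseteq> {..2 * card V}"
  proof
    fix t assume "t \<in> {str_f E f | f. numbering V f}"
    then obtain f where t: "t = str_f E f" and f: "numbering V f" by blast
    have "str_f E f \<le> 2 * card V"
    proof (rule str_f_le[OF assms False])
      fix x y assume "{x, y} \<in> E"
      then have "f x \<le> card V" "f y \<le> card V"
        using graph_edge_endpoints[OF assms] numbering_bounds(2)[OF f] by blast+
      then show "f x + f y \<le> 2 * card V" by simp
    qed
    then show "t \<in> {..2 * card V}" using t by simp
  qed
  then show ?thesis using finite_subset by blast
qed

lemma strength_eqI:
  assumes "graph V E" "numbering V f" "str_f E f = b" "\<And>g. numbering V g \<Longrightarrow> b \<le> str_f E g"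
  shows "strength V E = b"
  unfolding strength_def using assms finite_str_f_values[OF assms(1)]
  by (intro Min_eqI) auto

definition induced_str_le :: "'a set set \<Rightarrow> 'a set \<Rightarrow> ('a \<Rightarrow> nat) \<Rightarrow> nat \<Rightarrow> bool" where
  "induced_str_le E W f b \<longleftrightarrow> (\<forall>x\<in>W. \<forall>y\<in>W. {x, y} \<in> E \<longrightarrow> f x + f y \<le> b)"

lemma nonisolated_isolated_partition:
  "W = nonisolated_in E W \<union> isolated_in E W" "nonisolated_in E W \<inter> isolated_in E W = {}"
  unfolding nonisolated_in_def isolated_in_def by auto

lemma edge_in_nonisolated:
  assumes "x \<in> W" "y \<in> W" "{x, y} \<in> E"
  shows "x \<in> nonisolated_in E W" "y \<in> nonisolated_in E W"
proof -
  have "{y, x} \<in> E" using assms(3) by (subst insert_commute)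
  then show "x \<in> nonisolated_in E W" "y \<in> nonisolated_in E W"
    using assms unfolding nonisolated_in_def by blast+
qed

lemma numbering_nonisolated_first:
  assumes G: "graph V E" and "finite W"
    and card_NI: "card (nonisolated_in E W) \<le> card (isolated_in E W) + K + 1"
  shows "\<exists>f. numbering W f \<and> induced_str_le E W f (card W + K)"
proof -
  define NI I where "NI = nonisolated_in E W" and "I = isolated_in E W"
  note W = nonisolated_isolated_partition[where W = W and E = E, folded NI_def I_def]
  have fin: "finite NI" "finite I" using W(1) \<open>finite W\<close> by (metis finite_Un)+
  obtain g h where g: "numbering NI g" and h: "numbering I h"
    using ex_numbering fin by metis
  define f where "f x = (if x \<in> NI then g x else card NI + h x)" for x
  have "numbering W f"
    using numbering_Un[OF g h W(2) fin] W(1) by (simp add: f_def[abs_def])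
  moreover have "induced_str_le E W f (card W + K)"
    unfolding induced_str_le_def
  proof (intro ballI impI)
    fix x y assume xy: "x \<in> W" "y \<in> W" "{x, y} \<in> E"
    note xy_NI = edge_in_nonisolated[OF xy, folded NI_def]
    have "x \<noteq> y" using graph_edge_endpoints(1)[OF G xy(3)] .
    with xy_NI have "g x \<le> card NI" "g y \<le> card NI" "g x \<noteq> g y"
      using numbering_bounds(2)[OF g] numbering_inj[OF g] by blast+
    moreover have "card W = card NI + card I" using W fin by (simp add: card_Un_disjoint)
    ultimately show "f x + f y \<le> card W + K"
      using xy_NI card_NI by (simp add: f_def NI_def I_def)
  qed
  ultimately show ?thesis by blast
qed

lemma closed_nbhd_partition:
  fixes E :: "'a set set" and W :: "'a set" and u :: 'a
  defines "NI \<equiv> nonisolated_in E W"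
  defines "B \<equiv> nbrs_in E NI u"
  defines "W' \<equiv> NI - insert u B"
  assumes G: "graph V E" and u: "u \<in> NI"
  shows "NI = (B \<union> W') \<union> {u}" "B \<inter> W' = {}" "(B \<union> W') \<inter> {u} = {}"
proof -
  have "u \<notin> B" using graph_edge_endpoints(1)[OF G] unfolding B_def nbrs_in_def by blast
  then show "NI = (B \<union> W') \<union> {u}" "B \<inter> W' = {}" "(B \<union> W') \<inter> {u} = {}"
    using u unfolding W'_def B_def nbrs_in_def by auto
qed

lemma numbering_closed_nbhd_layout:
  fixes E :: "'a set set" and W :: "'a set" and u :: 'a
  defines "NI \<equiv> nonisolated_in E W" and "I \<equiv> isolated_in E W"
  defines "B \<equiv> nbrs_in E NI u"
  defines "W' \<equiv> NI - insert u B"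
  assumes G: "graph V E" and "finite W" and u: "u \<in> NI" and g: "numbering W' g"
  shows "\<exists>f. numbering W f \<and> (\<forall>x\<in>NI. f x \<le> card NI) \<and> (\<forall>x\<in>B. f x \<le> card B)
    \<and> (\<forall>x\<in>W'. f x = card B + g x)"
proof -
  note W = nonisolated_isolated_partition[where W = W and E = E, folded NI_def I_def]
  note NI = closed_nbhd_partition[OF G u[unfolded NI_def], folded NI_def, folded B_def, folded W'_def]
  have fin: "finite NI" "finite I" using W(1) \<open>finite W\<close> by (metis finite_Un)+
  then have fin': "finite B" "finite W'" using NI(1) by simp_all
  obtain gB gI where gB: "numbering B gB" and gI: "numbering I gI"
    using ex_numbering fin fin' by metis
  have one: "numbering {u} (\<lambda>_. 1)" by (simp add: numbering_def bij_betw_def)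
  define fBW where "fBW x = (if x \<in> B then gB x else card B + g x)" for x
  define fNI where "fNI x = (if x \<in> B \<union> W' then fBW x else card (B \<union> W') + 1)" for x
  define f where "f x = (if x \<in> NI then fNI x else card NI + gI x)" for x
  have nBW: "numbering (B \<union> W') fBW"
    using numbering_Un[OF gB g NI(2) fin'] by (simp add: fBW_def[abs_def])
  have nNI: "numbering NI fNI"
    using numbering_Un[OF nBW one NI(3)] fin' NI(1) by (simp add: fNI_def[abs_def])
  have "numbering W f"
    using numbering_Un[OF nNI gI W(2) fin] W(1) by (simp add: f_def[abs_def])
  moreover have "f x \<le> card NI" if "x \<in> NI" for x
    using numbering_bounds(2)[OF nNI that] that by (simp add: f_def)
  moreover have "f x \<le> card B" if "x \<in> B" for x
    using numbering_bounds(2)[OF gB that] that NI(1) by (simp add: f_def fNI_def fBW_def)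
  moreover have "f x = card B + g x" if "x \<in> W'" for x
    using that NI by (auto simp: f_def fNI_def fBW_def)
  ultimately show ?thesis by blast
qed

lemma numbering_extend_closed_nbhd:
  fixes E :: "'a set set" and W :: "'a set" and u :: 'a and K :: nat
  defines "NI \<equiv> nonisolated_in E W" and "I \<equiv> isolated_in E W"
  defines "B \<equiv> nbrs_in E NI u"
  defines "W' \<equiv> NI - insert u B"
  assumes G: "graph V E" and "finite W" and u: "u \<in> NI"
    and d: "card B \<le> card I + K"
    and g: "numbering W' g" and g_le: "induced_str_le E W' g (card W' + (card I + K + 1 - card B))"
  shows "\<exists>f. numbering W f \<and> induced_str_le E W f (card W + K)"
proof -
  obtain f where f: "numbering W f" and f_NI: "\<forall>x\<in>NI. f x \<le> card NI"
    and f_B: "\<forall>x\<in>B. f x \<le> card B" and f_W': "\<forall>x\<in>W'. f x = card B + g x"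
    using numbering_closed_nbhd_layout[OF G \<open>finite W\<close> u[unfolded NI_def]
        g[unfolded W'_def B_def NI_def], folded NI_def, folded B_def, folded W'_def]
    by blast
  note W = nonisolated_isolated_partition[where W = W and E = E, folded NI_def I_def]
  note NI = closed_nbhd_partition[OF G u[unfolded NI_def], folded NI_def, folded B_def, folded W'_def]
  have "finite NI" "finite I" using W(1) \<open>finite W\<close> by (metis finite_Un)+
  then have card_NI: "card NI = card B + card W' + 1" and card_W: "card W = card NI + card I"
    using NI W by (simp_all add: card_Un_disjoint)
  have "induced_str_le E W f (card W + K)"
    unfolding induced_str_le_def
  proof (intro ballI impI)
    fix x y assume xy: "x \<in> W" "y \<in> W" "{x, y} \<in> E"
    note xy_NI = edge_in_nonisolated[OF xy, folded NI_def]
    have nbr_B: "z \<in> B" if "{u, z} \<in> E" "z \<in> NI" for z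
      using that unfolding B_def nbrs_in_def by blast
    consider "x \<in> B" | "y \<in> B" | "x \<in> W'" "y \<in> W'"
    proof (cases "x \<in> B \<or> y \<in> B")
      case False
      have "x \<noteq> u" using nbr_B[OF _ xy_NI(2)] xy(3) False by blast
      moreover have "y \<noteq> u" using nbr_B[OF _ xy_NI(1)] xy(3) False by (metis insert_commute)
      ultimately show ?thesis using that False xy_NI NI(1) by blast
    qed (use that in blast)
    then show "f x + f y \<le> card W + K"
    proof cases
      case 1
      then show ?thesis using f_B f_NI xy_NI(2) card_NI card_W d by fastforce
    next
      case 2
      then show ?thesis using f_B f_NI xy_NI(1) card_NI card_W d by fastforce
    next
      case 3
      then have "g x + g y \<le> card W' + (card I + K + 1 - card B)"
        using g_le xy(3) unfolding induced_str_le_def by blast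
      then show ?thesis using 3 f_W' card_NI card_W d by simp
    qed
  qed
  with f show ?thesis by blast
qed

lemma d_sequence_subset:
  assumes D: "d_sequence V E s W u" and "1 \<le> j" "j \<le> s"
  shows "W j \<subseteq> V"
  using assms(2,3)
proof (induction j rule: dec_induct)
  case base
  then show ?case using D by (simp add: d_sequence_def)
next
  case (step i)
  then have "W (Suc i) \<subseteq> W i"
    using D unfolding d_sequence_def nonisolated_in_def by auto
  with step show ?case by simp
qed

lemma d_sequence_numbering:
  assumes G: "graph V E" and D: "d_sequence V E s W u" and "1 \<le> j" "j \<le> s"
    and "\<forall>i. j \<le> i \<and> i \<le> s \<longrightarrow> 1 \<le> int K + (\<Sum>l = j..i. dseq_y E s W u l)"
  shows "\<exists>f. numbering (W j) f \<and> induced_str_le E (W j) f (card (W j) + K)"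
  using assms(4,3,5)
proof (induction j arbitrary: K rule: inc_induct)
  case base
  have fin: "finite (W s)"
    using d_sequence_subset[OF D base(1) order_refl] G finite_subset unfolding graph_def by blast
  have "1 \<le> int K + dseq_y E s W u s" using base(2) by auto
  then have "dseq_d E s W u s \<le> card (isolated_in E (W s)) + K"
    by (simp add: dseq_y_def dseq_m_def)
  moreover have "card (nonisolated_in E (W s)) \<le> dseq_d E s W u s + 1"
    using D unfolding d_sequence_def stop_form_def
    by (auto simp: dseq_d_def edgeless_form_def)
  ultimately show ?case using numbering_nonisolated_first[OF G fin] by simp
next
  case (step n)
  define NI where "NI = nonisolated_in E (W n)"
  define B where "B = nbrs_in E NI (u n)"
  define m where "m = card (isolated_in E (W n))"
  have Dn: "u n \<in> NI" "W (Suc n) = NI - insert (u n) B"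
    using D step(2) step.prems(1) unfolding d_sequence_def NI_def B_def by auto
  have fin: "finite (W n)"
    using d_sequence_subset[OF D step.prems(1)] step(2) G finite_subset unfolding graph_def by fastforce
  have y_n: "dseq_y E s W u n = int m + 1 - int (card B)"
    using step(2) by (simp add: dseq_y_def dseq_d_def dseq_m_def m_def B_def NI_def)
  have "1 \<le> int K + dseq_y E s W u n" using step(1,2) step.prems(2) by auto
  then have d: "card B \<le> m + K" using y_n by simp
  define K' where "K' = m + K + 1 - card B"
  have K': "int K' = int K + dseq_y E s W u n" using d y_n by (simp add: K'_def)
  have "\<forall>i. Suc n \<le> i \<and> i \<le> s \<longrightarrow> 1 \<le> int K' + (\<Sum>l = Suc n..i. dseq_y E s W u l)"
  proof (intro allI impI)
    fix i assume i: "Suc n \<le> i \<and> i \<le> s"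
    then have "(\<Sum>l = n..i. dseq_y E s W u l) = dseq_y E s W u n + (\<Sum>l = Suc n..i. dseq_y E s W u l)"
      by (intro sum.atLeast_Suc_atMost) simp
    moreover have "1 \<le> int K + (\<Sum>l = n..i. dseq_y E s W u l)"
      using step.prems(2) i by simp
    ultimately show "1 \<le> int K' + (\<Sum>l = Suc n..i. dseq_y E s W u l)"
      using K' by linarith
  qed
  with step.IH obtain g where "numbering (W (Suc n)) g"
    "induced_str_le E (W (Suc n)) g (card (W (Suc n)) + K')"
    by fastforce
  with Dn d show ?case
    using numbering_extend_closed_nbhd[OF G fin, of "u n" K g]
    by (simp add: NI_def B_def m_def K'_def add.commute)
qed

lemma d_sequence_prefix_sum:
  assumes D: "d_sequence V E s W u" and iso: "isolated_in E V = {}" and "1 \<le> i"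
  shows "(\<Sum>l = 1..i. dseq_y E s W u l) = 1 - int (dseq_d E s W u 1) + dseq_z E s W u i"
proof -
  have "(\<Sum>l = 1..i. dseq_y E s W u l) = dseq_y E s W u 1 + (\<Sum>l = 2..i. dseq_y E s W u l)"
    using assms(3) by (simp add: sum.atLeast_Suc_atMost numeral_2_eq_2)
  moreover have "W 1 = V" using D by (simp add: d_sequence_def)
  ultimately show ?thesis using iso by (simp add: dseq_y_def dseq_m_def dseq_z_def)
qed

lemma graph_plus_star:
  assumes G: "graph V E"
  shows "graph (plus_star_V V k) (plus_star_E E k)"
  unfolding graph_def
proof (intro conjI ballI)
  show "finite (plus_star_V V k)" "plus_star_V V k \<noteq> {}"
    using G by (simp_all add: graph_def plus_star_V_def)
  fix e assume "e \<in> plus_star_E E k"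
  then consider (H) e' where "e' \<in> E" "e = Inl ` e'" | (S) j where "j \<in> {1..k}" "e = {Inr 0, Inr j}"
    unfolding plus_star_E_def by auto
  then show "\<exists>x y. e = {x, y} \<and> x \<in> plus_star_V V k \<and> y \<in> plus_star_V V k \<and> x \<noteq> y"
  proof cases
    case H
    obtain x y where "e' = {x, y}" "x \<in> V" "y \<in> V" "x \<noteq> y"
      by (rule graph_edgeE[OF G H(1)])
    then show ?thesis
      using H(2) by (intro exI[of _ "Inl x"] exI[of _ "Inl y"]) (simp add: plus_star_V_def)
  next
    case S
    then show ?thesis
      by (intro exI[of _ "Inr 0"] exI[of _ "Inr j"]) (simp add: plus_star_V_def)
  qed
qed

lemma card_plus_star_V:
  assumes "finite V"
  shows "card (plus_star_V V k) = card V + k + 1"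
  using assms unfolding plus_star_V_def
  by (subst card_Un_disjoint) (auto simp: card_image)

lemma plus_star_neighbour:
  assumes nb: "\<And>v. v \<in> V \<Longrightarrow> \<exists>w. {v, w} \<in> E" and "1 \<le> k" and x: "x \<in> plus_star_V V k"
  shows "\<exists>y. {x, y} \<in> plus_star_E E k"
proof -
  consider v where "x = Inl v" "v \<in> V" | "x = Inr 0" | j where "x = Inr j" "j \<in> {1..k}"
    using x unfolding plus_star_V_def by fastforce
  then show ?thesis
  proof cases
    case 1
    then obtain w where "{v, w} \<in> E" using nb by blast
    then have "Inl ` {v, w} \<in> plus_star_E E k" unfolding plus_star_E_def by blast
    then show ?thesis using 1 by auto
  next
    case 2
    then show ?thesis using \<open>1 \<le> k\<close> unfolding plus_star_E_def by auto
  next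
    case 3
    then have "{Inr 0, x} \<in> plus_star_E E k" unfolding plus_star_E_def by auto
    then show ?thesis by (metis insert_commute)
  qed
qed

lemma plus_star_numbering:
  assumes G: "graph V E" and g: "numbering V g" and g_le: "induced_str_le E V g (card V + k)"
    and "1 \<le> k"
  shows "\<exists>f. numbering (plus_star_V V k) f \<and> str_f (plus_star_E E k) f \<le> card V + k + 2"
proof -
  have fin: "finite V" using G by (simp add: graph_def)
  have "bij_betw projl (Inl ` V :: ('a + nat) set) V" by (simp add: bij_betw_def inj_on_def image_image)
  from bij_betw_trans[OF this g[unfolded numbering_def]]
  have num_H: "numbering (Inl ` V :: ('a + nat) set) (g \<circ> projl)" by (simp add: numbering_def card_image)
  have "bij_betw projr (Inr ` {1..k} :: ('a + nat) set) {1..k}" by (simp add: bij_betw_def inj_on_def image_image)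
  then have num_leaves: "numbering (Inr ` {1..k} :: ('a + nat) set) projr" by (simp add: numbering_def card_image)
  have num_centre: "numbering {Inr 0 :: 'a + nat} (\<lambda>_. 1)" by (simp add: numbering_def bij_betw_def)
  define f0 where "f0 x = (if x \<in> Inl ` V then g (projl x) else card V + projr x)" for x
  define f where "f x = (if x = Inr 0 then 1 else 1 + f0 x)" for x
  have "Inl ` V \<inter> Inr ` {1..k} = {}" by blast
  from numbering_Un[OF num_H num_leaves this] have F0: "numbering (Inl ` V \<union> Inr ` {1..k}) f0"
    by (rule numbering_cong) (auto simp: fin f0_def card_image)
  from numbering_Un[OF num_centre F0] have "numbering ({Inr 0} \<union> (Inl ` V \<union> Inr ` {1..k})) f"
    by (rule numbering_cong) (auto simp: fin f_def)
  moreover have "{Inr 0} \<union> (Inl ` V \<union> Inr ` {1..k}) = plus_star_V V k"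
    unfolding plus_star_V_def by auto
  moreover have "str_f (plus_star_E E k) f \<le> card V + k + 2"
  proof (rule str_f_le[OF graph_plus_star[OF G]])
    show "plus_star_E E k \<noteq> {}" using \<open>1 \<le> k\<close> unfolding plus_star_E_def by auto
    fix a b assume "{a, b} \<in> plus_star_E E k"
    then consider (H) e where "e \<in> E" "{a, b} = Inl ` e"
      | (S) j where "j \<in> {1..k}" "{a, b} = {Inr 0, Inr j}"
      unfolding plus_star_E_def by auto
    then show "f a + f b \<le> card V + k + 2"
    proof cases
      case H
      obtain x y where xy: "e = {x, y}" "x \<in> V" "y \<in> V"
        by (rule graph_edgeE[OF G H(1)])
      then have "f (Inl x) + f (Inl y) \<le> card V + k + 2"
        using g_le H(1) unfolding induced_str_le_def by (simp add: f_def f0_def)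
      moreover have "{a, b} = {Inl x, Inl y}" using H(2) xy(1) by simp
      ultimately show ?thesis by (auto simp: doubleton_eq_iff)
    next
      case S
      then have "f (Inr 0) + f (Inr j) \<le> card V + k + 2" by (auto simp: f_def f0_def)
      then show ?thesis using S(2) by (auto simp: doubleton_eq_iff)
    qed
  qed
  ultimately show ?thesis by auto
qed

lemma min_degree_pos_neighbour:
  assumes G: "graph V E" and "1 \<le> min_degree V E" and "v \<in> V"
  shows "\<exists>w\<in>V. {v, w} \<in> E"
proof -
  have "finite V" using G by (simp add: graph_def)
  then have "min_degree V E \<le> degree V E v"
    unfolding min_degree_def using \<open>v \<in> V\<close> by simp
  with assms(2) have "{w \<in> V. {v, w} \<in> E} \<noteq> {}"
    unfolding degree_def by force
  then show ?thesis by blast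
qed

lemma d_sequence_d_pos:
  assumes G: "graph V E" and D: "d_sequence V E s W u" and "1 \<le> i" "i < s"
  shows "1 \<le> dseq_d E s W u i"
proof -
  define NI where "NI = nonisolated_in E (W i)"
  have "u i \<in> NI" using D assms(3,4) unfolding d_sequence_def NI_def by blast
  then obtain w where w: "w \<in> W i" "{u i, w} \<in> E" "u i \<in> W i"
    unfolding NI_def nonisolated_in_def by blast
  then have "w \<in> nbrs_in E NI (u i)"
    using edge_in_nonisolated(2)[OF w(3,1,2)] unfolding NI_def nbrs_in_def by blast
  moreover have "finite (nbrs_in E NI (u i))"
    using d_sequence_subset[OF D assms(3)] assms(4) G finite_subset
    unfolding graph_def nbrs_in_def NI_def nonisolated_in_def by fastforce
  ultimately show ?thesis
    using assms(4) by (auto simp: dseq_d_def NI_def Suc_le_eq card_gt_0_iff)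
qed

lemma d_sequence_prefix_sums_pos:
  fixes E :: "'a set set" and s k :: nat and W :: "nat \<Rightarrow> 'a set" and u :: "nat \<Rightarrow> 'a"
  defines "Z \<equiv> Min {dseq_z E s W u i | i. 2 \<le> i \<and> i \<le> s}"
  assumes D: "d_sequence V E s W u" and iso: "isolated_in E V = {}"
    and "Z \<le> 0" and "int k \<ge> int (dseq_d E s W u 1) - Z"
  shows "\<forall>i. 1 \<le> i \<and> i \<le> s \<longrightarrow> 1 \<le> int k + (\<Sum>l = 1..i. dseq_y E s W u l)"
proof (intro allI impI)
  fix i assume i: "1 \<le> i \<and> i \<le> s"
  have "Z \<le> dseq_z E s W u i"
  proof (cases "i = 1")
    case True
    then show ?thesis using \<open>Z \<le> 0\<close> by (simp add: dseq_z_def)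
  next
    case False
    have "{dseq_z E s W u i | i. 2 \<le> i \<and> i \<le> s} = dseq_z E s W u ` {2..s}" by auto
    then show ?thesis using False i unfolding Z_def by simp
  qed
  then show "1 \<le> int k + (\<Sum>l = 1..i. dseq_y E s W u l)"
    using d_sequence_prefix_sum[OF D iso] i assms(5) by simp
qed

theorem mainTheorem9:
  fixes V :: "'a set" and E :: "'a set set" and s k :: nat
    and W :: "nat \<Rightarrow> 'a set" and u :: "nat \<Rightarrow> 'a"
  assumes "graph V E"
    and "1 \<le> min_degree V E" and "min_degree V E \<le> card V - 2"
    and "d_sequence V E s W u"
    and "Min {dseq_z E s W u i | i. 2 \<le> i \<and> i \<le> s} \<le> 0"
    and "int k \<ge> int (dseq_d E s W u 1) - Min {dseq_z E s W u i | i. 2 \<le> i \<and> i \<le> s}"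
  shows "strength (plus_star_V V k) (plus_star_E E k) = card (plus_star_V V k) + 1"
proof -
  \<comment> \<open>\<open>min_degree V E \<le> card V - 2\<close> only guarantees that d-sequences exist.\<close>
  note G = assms(1) and D = assms(4)
  have W1: "W 1 = V" and "2 \<le> s" using D by (simp_all add: d_sequence_def)
  have nb: "\<exists>w\<in>V. {v, w} \<in> E" if "v \<in> V" for v
    using min_degree_pos_neighbour[OF G assms(2) that] .
  have nb': "\<exists>w. {v, w} \<in> E" if "v \<in> V" for v
    using nb[OF that] by auto
  have "isolated_in E V = {}" using nb by (simp add: isolated_in_def)
  from d_sequence_numbering[OF G D order_refl _ d_sequence_prefix_sums_pos[OF D this assms(5,6)]]
  obtain g where g: "numbering V g" "induced_str_le E V g (card V + k)"
    using \<open>2 \<le> s\<close> unfolding W1 by auto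
  have "1 \<le> k"
    using d_sequence_d_pos[OF G D, of 1] \<open>2 \<le> s\<close> assms(5,6) by linarith
  obtain f where f: "numbering (plus_star_V V k) f" "str_f (plus_star_E E k) f \<le> card V + k + 2"
    using plus_star_numbering[OF G g \<open>1 \<le> k\<close>] by blast
  have lower: "card (plus_star_V V k) + 1 \<le> str_f (plus_star_E E k) h"
    if "numbering (plus_star_V V k) h" for h
    by (rule str_f_ge_card_Suc[OF graph_plus_star[OF G] plus_star_neighbour[OF nb' \<open>1 \<le> k\<close>] that])
  have "card (plus_star_V V k) = card V + k + 1"
    using G by (simp add: card_plus_star_V graph_def)
  with f(2) lower[OF f(1)] have "str_f (plus_star_E E k) f = card (plus_star_V V k) + 1"
    by linarith
  from strength_eqI[OF graph_plus_star[OF G] f(1) this lower] show ?thesis .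
qed

end
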